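(* Let $m\ge2$ be an integer and $z$ a complex number with $0<|z|<1$. Then $$\sum_{k=1}^\infty\frac{\binom{2k}{m}z^{2k}}{(2k-1)k^2(2k+1)}=\frac{2(-1)^{m-1}}{m}\ln(1-z^2)+\frac{(-1)^m}{z}\ln\Big(\frac{1-z}{1+z}\Big)$$ $$+\frac{1}{m-1}\left((-1)^m(1+z)\Big(\frac{z}{1+z}\Big)^m+(1-z)\Big(\frac{z}{1-z}\Big)^m\right)-\frac1m\left((-1)^mz\Big(\frac{z}{1+z}\Big)^m-z\Big(\frac{z}{1-z}\Big)^m\right)$$ $$+\frac2m\sum_{j=1}^{m-1}\frac{1}{m-j}\left((-1)^m\Big(\frac{z}{1+z}\Big)^{m-j}+(-1)^j\Big(\frac{z}{1-z}\Big)^{m-j}\right)$$ $$+\sum_{j=0}^{m-1}\frac{1}{m-j}\left((-1)^m\frac1z\Big(\frac{z}{1+z}\Big)^{m-j}-(-1)^j\frac1z\Big(\frac{z}{1-z}\Big)^{m-j}\right).$$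
   Context: $\ln$ denotes the principal branch of the logarithm. *)

theory Defs
  imports "HOL-Analysis.Analysis"
begin

end

theory Submission
  imports Defs
begin

text \<open>
  For \<open>n = 2k\<close> one has \<open>1 / ((2k - 1) k^2 (2k + 1)) = 2/(n - 1) - 2/(n + 1) - 4/n^2\<close>, so
  the series is the even part \<open>(f z + f (-z)) / 2\<close> of
  \<open>f x = \<Sum>n. C(n,m) x^n (2/(n - 1) - 2/(n + 1) - 4/n^2)\<close>, and it suffices to sum
  the three pieces of \<open>f\<close> in closed form.

  Starting from \<open>\<Sum>n. C(n,k) x^n = x^k / (1 - x)^(k+1)\<close>, the series
  \<open>L k x = \<Sum>n. C(n,k) x^(n+1) / (n + 1)\<close> satisfies \<open>L 0 x = - Ln (1 - x)\<close> and, by Pascal's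
  rule and absorption \<open>(n + 1) C(n,k) = (k + 1) C(n+1, k+1)\<close>,
  \<open>L (k+1) x = u^(k+1) / (k + 1) - L k x\<close> with \<open>u = x / (1 - x)\<close>; this makes \<open>L k\<close> explicit.
  Dividing by \<open>n + 1\<close> gives \<open>L m x / x\<close>, and absorption turns the divisions by \<open>n^2\<close> and
  \<open>n - 1\<close> into \<open>L (m - 1) x / m\<close> and a combination of the undivided series for \<open>m - 1\<close> and
  \<open>m - 2\<close>. Symmetrising in \<open>z\<close> gives the formula; the logarithms combine because \<open>1 - z\<close> and
  \<open>1 + z\<close> lie in the right half-plane.
\<close>

lemma of_nat_Suc_choose_Suc:
  "(of_nat (Suc n choose Suc k) :: 'a::field_char_0)
     = of_nat (Suc n) / of_nat (Suc k) * of_nat (n choose k)"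
proof -
  have "(of_nat (Suc k) * of_nat (Suc n choose Suc k) :: 'a) = of_nat (Suc n) * of_nat (n choose k)"
    by (metis Suc_times_binomial of_nat_mult)
  then show ?thesis
    by (simp add: field_simps del: binomial_Suc_Suc of_nat_Suc)
qed

lemma sum_binomial_power_convolution:
  fixes x :: "'a::comm_semiring_1"
  shows "(\<Sum>i\<le>n. of_nat (i choose k) * x ^ i * x ^ (n - i)) = of_nat (Suc n choose Suc k) * x ^ n"
proof -
  have "(\<Sum>i\<le>n. of_nat (i choose k) * x ^ i * x ^ (n - i)) = (\<Sum>i\<le>n. of_nat (i choose k) * x ^ n)"
    by (intro sum.cong refl) (simp add: mult.assoc flip: power_add)
  also have "\<dots> = of_nat (\<Sum>i\<le>n. i choose k) * x ^ n"
    by (simp add: sum_distrib_right)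
  finally show ?thesis
    by (simp only: sum_choose_upper)
qed

lemma binomial_power_sums:
  fixes x :: "'a::{real_normed_field,banach}"
  assumes "norm x < 1"
  shows "summable (\<lambda>n. norm (of_nat (n choose k) * x ^ n))"
    and "(\<lambda>n. of_nat (n choose k) * x ^ n) sums (x ^ k / (1 - x) ^ Suc k)"
proof -
  have geom: "summable (\<lambda>n. norm (x ^ n))" "(\<lambda>n. x ^ n) sums (1 / (1 - x))"
    using assms geometric_sums[OF assms]
    by (simp_all add: norm_power summable_geometric divide_inverse)
  have "summable (\<lambda>n. norm (of_nat (n choose k) * x ^ n)) \<and>
        (\<lambda>n. of_nat (n choose k) * x ^ n) sums (x ^ k / (1 - x) ^ Suc k)"
  proof (induction k)
    case 0
    then show ?case
      using geom by simp
  next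
    case (Suc k)
    let ?a = "\<lambda>n. of_nat (n choose k) * x ^ n"
    have "(\<lambda>n. \<Sum>i\<le>n. ?a i * x ^ (n - i)) sums (x ^ k / (1 - x) ^ Suc k * (1 / (1 - x)))"
      using Cauchy_product_sums[of ?a "\<lambda>n. x ^ n"] Suc geom by (simp add: sums_iff)
    then have "(\<lambda>n. of_nat (Suc n choose Suc k) * x ^ n) sums (x ^ k / (1 - x) ^ Suc (Suc k))"
      by (simp only: sum_binomial_power_convolution) (simp add: field_simps)
    from sums_mult[OF this, of x]
    have "(\<lambda>n. x * (of_nat (Suc n choose Suc k) * x ^ n)) sums (x ^ Suc k / (1 - x) ^ Suc (Suc k))"
      by (simp add: field_simps)
    then have sums: "(\<lambda>n. of_nat (n choose Suc k) * x ^ n) sums (x ^ Suc k / (1 - x) ^ Suc (Suc k))"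
      using sums_Suc_iff[of "\<lambda>n. of_nat (n choose Suc k) * x ^ n"]
      by (simp add: mult_ac del: binomial_Suc_Suc)
    have "summable (\<lambda>n. \<Sum>i\<le>n. of_nat (i choose k) * norm x ^ i * norm x ^ (n - i))"
      using summable_Cauchy_product[of "\<lambda>n. norm (?a n)" "\<lambda>n. norm (x ^ n)"] Suc geom
      by (simp add: norm_mult norm_power mult.assoc)
    then have "summable (\<lambda>n. of_nat (Suc n choose Suc k) * norm x ^ n)"
      by (simp only: sum_binomial_power_convolution)
    then have "summable (\<lambda>n. norm x * (of_nat (Suc n choose Suc k) * norm x ^ n))"
      by (rule summable_mult)
    then have "summable (\<lambda>n. norm (of_nat (n choose Suc k) * x ^ n))"
      using summable_Suc_iff[of "\<lambda>n. norm (of_nat (n choose Suc k) * x ^ n)"]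
      by (simp add: norm_mult norm_power mult_ac del: binomial_Suc_Suc)
    with sums show ?case
      by blast
  qed
  then show "summable (\<lambda>n. norm (of_nat (n choose k) * x ^ n))"
    and "(\<lambda>n. of_nat (n choose k) * x ^ n) sums (x ^ k / (1 - x) ^ Suc k)"
    by blast+
qed

text \<open>The function \<open>L\<close> above: the primitive of \<open>t^k / (1 - t)^(k+1)\<close> vanishing at \<open>0\<close>.\<close>

definition binomial_primitive :: "nat \<Rightarrow> complex \<Rightarrow> complex" where
  "binomial_primitive k x =
     (\<Sum>j<k. (-1) ^ j * (x / (1 - x)) ^ (k - j) / of_nat (k - j)) - (-1) ^ k * Ln (1 - x)"

lemma binomial_primitive_0: "binomial_primitive 0 x = - Ln (1 - x)"
  by (simp add: binomial_primitive_def)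

lemma binomial_primitive_Suc:
  "binomial_primitive (Suc k) x = (x / (1 - x)) ^ Suc k / of_nat (Suc k) - binomial_primitive k x"
proof -
  have "(\<Sum>j<Suc k. (-1) ^ j * (x / (1 - x)) ^ (Suc k - j) / of_nat (Suc k - j))
      = (x / (1 - x)) ^ Suc k / of_nat (Suc k)
        - (\<Sum>j<k. (-1) ^ j * (x / (1 - x)) ^ (k - j) / of_nat (k - j))"
    by (subst sum.lessThan_Suc_shift) (simp add: sum_negf)
  then show ?thesis
    by (simp add: binomial_primitive_def)
qed

lemma binomial_primitive_sums:
  fixes x :: complex
  assumes "norm x < 1"
  shows "(\<lambda>n. of_nat (n choose k) * x ^ Suc n / of_nat (Suc n)) sums binomial_primitive k x"
proof (induction k)
  case 0
  have "(\<lambda>n. - ((-(-x)) ^ n) / of_nat n) sums Ln (1 + (-x))"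
    using Ln_series'[of "-x"] assms by simp
  then have "(\<lambda>n. x ^ n / of_nat n) sums (- Ln (1 - x))"
    using sums_minus by fastforce
  then show ?case
    using sums_Suc_iff[of "\<lambda>n. x ^ n / of_nat n"] by (simp add: binomial_primitive_0)
next
  case (Suc k)
  have "(\<lambda>n. x / of_nat (Suc k) * (of_nat (n choose k) * x ^ n))
      sums (x / of_nat (Suc k) * (x ^ k / (1 - x) ^ Suc k))"
    using binomial_power_sums(2)[OF assms] by (rule sums_mult)
  then have "(\<lambda>n. of_nat (Suc n choose Suc k) * x ^ Suc n / of_nat (Suc n))
      sums ((x / (1 - x)) ^ Suc k / of_nat (Suc k))"
    by (simp add: of_nat_Suc_choose_Suc power_divide field_simps del: binomial_Suc_Suc of_nat_Suc)
  from sums_diff[OF this Suc] show ?case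
    by (simp add: binomial_primitive_Suc algebra_simps add_divide_distrib)
qed

lemma binomial_power_div_Suc_sums:
  fixes x :: complex
  assumes "norm x < 1" and "x \<noteq> 0"
  shows "(\<lambda>n. of_nat (n choose m) * x ^ n / of_nat (Suc n)) sums (binomial_primitive m x / x)"
  using sums_divide[OF binomial_primitive_sums[OF assms(1)], where c = x] assms(2)
  by (simp add: field_simps del: of_nat_Suc)

lemma binomial_power_div_square_sums:
  fixes x :: complex
  assumes "norm x < 1" and "m \<ge> 1"
  shows "(\<lambda>n. of_nat (n choose m) * x ^ n / of_nat n ^ 2)
    sums (binomial_primitive (m - 1) x / of_nat m)"
proof -
  obtain k where m: "m = Suc k"
    using assms(2) by (cases m) auto
  have "(\<lambda>n. of_nat (n choose k) * x ^ Suc n / of_nat (Suc n) / of_nat m)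
      sums (binomial_primitive k x / of_nat m)"
    using binomial_primitive_sums[OF assms(1)] by (rule sums_divide)
  then have "(\<lambda>n. of_nat (Suc n choose m) * x ^ Suc n / of_nat (Suc n) ^ 2)
      sums (binomial_primitive k x / of_nat m)"
    unfolding m
    by (simp add: of_nat_Suc_choose_Suc power2_eq_square field_simps
        del: binomial_Suc_Suc of_nat_Suc)
  then show ?thesis
    using sums_Suc_iff[of "\<lambda>n. of_nat (n choose m) * x ^ n / of_nat n ^ 2"] m by simp
qed

definition binomial_div_pred_sum :: "nat \<Rightarrow> complex \<Rightarrow> complex" where
  "binomial_div_pred_sum m x =
     (x / (1 - x)) ^ m / of_nat m + (1 - x) * (x / (1 - x)) ^ m / (of_nat m * of_nat (m - 1))"

lemma binomial_power_div_pred_sums: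
  fixes x :: complex
  assumes "norm x < 1" and "m \<ge> 2"
  shows "(\<lambda>n. of_nat (n choose m) * x ^ n / (of_nat n - 1)) sums binomial_div_pred_sum m x"
proof -
  obtain k where m: "m = Suc (Suc k)"
    using assms(2) by (metis add_2_eq_Suc le_Suc_ex)
  have "1 - x \<noteq> 0"
    using assms(1) by auto
  have "(\<lambda>n. x / of_nat m * (of_nat (Suc n choose Suc k) * x ^ Suc n)
           + x ^ 2 / (of_nat m * of_nat (Suc k)) * (of_nat (n choose k) * x ^ n))
     sums (x / of_nat m * (x ^ Suc k / (1 - x) ^ Suc (Suc k))
           + x ^ 2 / (of_nat m * of_nat (Suc k)) * (x ^ k / (1 - x) ^ Suc k))"
    using binomial_power_sums(2)[OF assms(1), of "Suc k"] binomial_power_sums(2)[OF assms(1), of k]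
      sums_Suc_iff[of "\<lambda>n. of_nat (n choose Suc k) * x ^ n"]
    by (intro sums_add sums_mult) simp_all
  moreover have "x / of_nat m * (of_nat (Suc n choose Suc k) * x ^ Suc n)
           + x ^ 2 / (of_nat m * of_nat (Suc k)) * (of_nat (n choose k) * x ^ n)
      = of_nat (Suc (Suc n) choose m) * x ^ Suc (Suc n) / (of_nat (Suc (Suc n)) - 1)" for n
  proof -
    have "(of_nat (Suc (Suc n)) - 1 :: complex) = of_nat (Suc n)"
      by simp
    then show ?thesis
      unfolding m of_nat_Suc_choose_Suc[of "Suc n"] of_nat_Suc_choose_Suc[of n]
      by (simp add: field_simps power2_eq_square del: of_nat_Suc)
  qed
  moreover have "x / M * (x ^ Suc k / c ^ Suc (Suc k)) + x ^ 2 / (M * K) * (x ^ k / c ^ Suc k)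
      = (x / c) ^ Suc (Suc k) / M + c * (x / c) ^ Suc (Suc k) / (M * K)"
    if "c \<noteq> 0" for c M K :: complex
    using that by (simp add: power_divide power2_eq_square field_simps)
  ultimately have "(\<lambda>n. of_nat (Suc (Suc n) choose m) * x ^ Suc (Suc n) / (of_nat (Suc (Suc n)) - 1))
     sums binomial_div_pred_sum m x"
    using \<open>1 - x \<noteq> 0\<close> by (simp add: binomial_div_pred_sum_def m)
  then show ?thesis
    using sums_Suc_iff[of "\<lambda>n. of_nat (n choose m) * x ^ n / (of_nat n - 1)"]
      sums_Suc_iff[of "\<lambda>n. of_nat (Suc n choose m) * x ^ Suc n / (of_nat (Suc n) - 1)"] m
    by simp
qed

lemma sums_even_terms:
  fixes f :: "nat \<Rightarrow> 'a::real_normed_field"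
  assumes "f sums A" and "(\<lambda>n. (-1) ^ n * f n) sums B"
  shows "(\<lambda>n. f (2 * n)) sums ((A + B) / 2)"
proof -
  have "(\<lambda>n. (f n + (-1) ^ n * f n) / 2) sums ((A + B) / 2)"
    using assms by (intro sums_divide sums_add)
  from sums_group[OF this, of 2] show ?thesis
    by (simp add: mult.commute)
qed

lemma Ln_mult_Re_pos:
  assumes "Re w > 0" and "Re v > 0"
  shows "Ln (w * v) = Ln w + Ln v"
proof -
  have "\<bar>Im (Ln w)\<bar> < pi / 2" and "\<bar>Im (Ln v)\<bar> < pi / 2"
    using assms Re_Ln_pos_lt_imp by auto
  with assms show ?thesis
    by (intro Ln_times_simple) auto
qed

lemma Ln_divide_Re_pos:
  assumes "Re w > 0" and "Re v > 0"
  shows "Ln (w / v) = Ln w - Ln v"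
proof -
  have "Re (inverse v) > 0"
    using assms by (simp add: Re_inverse complex_neq_0 add_pos_nonneg)
  moreover have "v \<notin> \<real>\<^sub>\<le>\<^sub>0"
    using assms by (auto simp: complex_nonpos_Reals_iff)
  ultimately show ?thesis
    using Ln_mult_Re_pos[OF assms(1)] Ln_inverse by (simp add: divide_inverse)
qed

lemma binomial_primitive_uminus:
  "binomial_primitive k (-x) =
     (-1) ^ k * ((\<Sum>j<k. (x / (1 + x)) ^ (k - j) / of_nat (k - j)) - Ln (1 + x))"
proof -
  have "(-1) ^ j * (- (x / (1 + x))) ^ (k - j) = (-1) ^ k * (x / (1 + x)) ^ (k - j)"
    if "j < k" for j
    using that by (simp add: power_minus[of "x / (1 + x)"] mult.assoc flip: power_add)
  then show ?thesis
    by (simp add: binomial_primitive_def sum_distrib_left right_diff_distrib mult.assoc)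
qed

lemma Re_one_minus_plus_pos:
  assumes "norm z < 1"
  shows "Re (1 - z) > 0" and "Re (1 + z) > 0"
  using abs_Re_le_cmod[of z] assms by auto

lemma binomial_primitive_odd_part:
  assumes "norm z < 1"
  shows "binomial_primitive k (-z) - binomial_primitive k z
    = (-1) ^ k * Ln ((1 - z) / (1 + z))
      + (\<Sum>j<k. ((-1) ^ k * (z / (1 + z)) ^ (k - j) - (-1) ^ j * (z / (1 - z)) ^ (k - j))
                  / of_nat (k - j))"
  unfolding binomial_primitive_uminus Ln_divide_Re_pos[OF Re_one_minus_plus_pos[OF assms]]
  by (simp add: binomial_primitive_def sum_distrib_left diff_divide_distrib sum_subtractf
      algebra_simps)

lemma binomial_primitive_even_part:
  assumes "norm z < 1"
  shows "binomial_primitive k z + binomial_primitive k (-z)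
    = (\<Sum>j<k. ((-1) ^ k * (z / (1 + z)) ^ (k - j) + (-1) ^ j * (z / (1 - z)) ^ (k - j))
                / of_nat (k - j))
      - (-1) ^ k * Ln (1 - z ^ 2)"
proof -
  have "Ln (1 - z ^ 2) = Ln (1 - z) + Ln (1 + z)"
    using Ln_mult_Re_pos[OF Re_one_minus_plus_pos[OF assms]]
    by (simp add: power2_eq_square algebra_simps)
  then show ?thesis
    unfolding binomial_primitive_uminus
    by (simp add: binomial_primitive_def sum_distrib_left add_divide_distrib sum.distrib
        algebra_simps)
qed

lemma binomial_div_pred_sum_even_part:
  assumes "m \<ge> 2"
  shows "binomial_div_pred_sum m z + binomial_div_pred_sum m (-z) =
    1 / of_nat (m - 1) * ((-1) ^ m * (1 + z) * (z / (1 + z)) ^ m + (1 - z) * (z / (1 - z)) ^ m)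
    - 1 / of_nat m * ((-1) ^ m * z * (z / (1 + z)) ^ m - z * (z / (1 - z)) ^ m)"
proof -
  define a where "a = z / (1 + z)"
  define b where "b = z / (1 - z)"
  have M: "(of_nat m :: complex) \<noteq> 0" "(of_nat (m - 1) :: complex) \<noteq> 0"
    using assms by auto
  have key: "w / M + c * w / (M * M') = c * w / M' + (1 - c) * w / M"
    if "M \<noteq> 0" "M' \<noteq> 0" "M = M' + 1" for w c M M' :: complex
  proof -
    have "w / M + c * w / (M * M') = (M' + c) * w / (M * M')"
      using that(1,2) by (simp add: field_simps)
    also have "\<dots> = c * w / M' + (1 - c) * w / M"
      using that by (simp add: field_simps)
    finally show ?thesis .
  qed
  have "(of_nat m :: complex) = of_nat (m - 1) + 1"
    using assms by (simp add: of_nat_diff)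
  note split = binomial_div_pred_sum_def[of m, unfolded key[OF M this]]
  have minus_a: "(-z) / (1 - -z) = - a"
    unfolding a_def by simp
  show ?thesis
    unfolding split minus_a a_def[symmetric] b_def[symmetric] power_minus[of a]
    using M by (simp add: field_simps del: of_nat_diff)
qed

lemma partial_fraction_decomposition:
  assumes "k \<ge> 1"
  shows "(2 / (of_nat (2 * k) - 1) - 2 / (of_nat (2 * k) + 1) - 4 / of_nat (2 * k) ^ 2
      :: 'a::field_char_0)
    = 1 / (of_nat (2 * k - 1) * of_nat k ^ 2 * of_nat (2 * k + 1))"
proof -
  define K :: 'a where "K = of_nat k"
  have A: "of_nat (2 * k - 1) = 2 * K - 1" and C: "of_nat (2 * k + 1) = 2 * K + 1"
    using assms by (simp_all add: K_def of_nat_diff)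
  have "2 * K - 1 \<noteq> 0" "2 * K + 1 \<noteq> 0"
    unfolding A[symmetric] C[symmetric] of_nat_eq_0_iff using assms by simp_all
  have "K \<noteq> 0"
    using assms by (simp add: K_def)
  have "2 / (2 * K - 1) - 2 / (2 * K + 1) = 4 / ((2 * K - 1) * (2 * K + 1))"
    using \<open>2 * K - 1 \<noteq> 0\<close> \<open>2 * K + 1 \<noteq> 0\<close> by (simp add: field_simps)
  moreover have "4 / (X * Y) - 1 / K ^ 2 = (4 * K ^ 2 - X * Y) / (X * K ^ 2 * Y)"
    if "X \<noteq> 0" "Y \<noteq> 0" for X Y
    using that \<open>K \<noteq> 0\<close> by (simp add: field_simps)
  moreover have "4 * K ^ 2 - (2 * K - 1) * (2 * K + 1) = 1"
    by (simp add: algebra_simps power2_eq_square)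
  ultimately show ?thesis
    using \<open>2 * K - 1 \<noteq> 0\<close> \<open>2 * K + 1 \<noteq> 0\<close>
    unfolding A C K_def[symmetric] of_nat_mult of_nat_numeral by (simp add: power2_eq_square)
qed

definition binomial_partial_fraction_sum :: "nat \<Rightarrow> complex \<Rightarrow> complex" where
  "binomial_partial_fraction_sum m x =
     2 * binomial_div_pred_sum m x - 2 * (binomial_primitive m x / x)
     - 4 * (binomial_primitive (m - 1) x / of_nat m)"

lemma binomial_partial_fraction_sums:
  fixes x :: complex
  assumes "norm x < 1" and "x \<noteq> 0" and "m \<ge> 2"
  shows "(\<lambda>n. of_nat (n choose m) * x ^ n
              * (2 / (of_nat n - 1) - 2 / (of_nat n + 1) - 4 / of_nat n ^ 2))
    sums binomial_partial_fraction_sum m x"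
proof -
  have "(\<lambda>n. 2 * (of_nat (n choose m) * x ^ n / (of_nat n - 1))
      - 2 * (of_nat (n choose m) * x ^ n / of_nat (Suc n))
      - 4 * (of_nat (n choose m) * x ^ n / of_nat n ^ 2)) sums binomial_partial_fraction_sum m x"
    unfolding binomial_partial_fraction_sum_def using assms
    by (intro sums_diff sums_mult binomial_power_div_pred_sums binomial_power_div_Suc_sums
        binomial_power_div_square_sums) auto
  then show ?thesis
    by (simp add: algebra_simps)
qed

lemma binomial_partial_fraction_sum_even_part:
  fixes m :: nat and z :: complex
  assumes "m \<ge> 2" and "z \<noteq> 0" and "norm z < 1"
  shows "(binomial_partial_fraction_sum m z + binomial_partial_fraction_sum m (-z)) / 2 =
     2 * (-1) ^ (m - 1) / of_nat m * Ln (1 - z^2)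
     + (-1) ^ m / z * Ln ((1 - z) / (1 + z))
     + 1 / of_nat (m - 1) * ((-1) ^ m * (1 + z) * (z / (1 + z)) ^ m
                              + (1 - z) * (z / (1 - z)) ^ m)
     - 1 / of_nat m * ((-1) ^ m * z * (z / (1 + z)) ^ m - z * (z / (1 - z)) ^ m)
     + 2 / of_nat m * (\<Sum>j=1..m-1. 1 / of_nat (m - j) *
          ((-1) ^ m * (z / (1 + z)) ^ (m - j) + (-1) ^ j * (z / (1 - z)) ^ (m - j)))
     + (\<Sum>j=0..m-1. 1 / of_nat (m - j) *
          ((-1) ^ m * (1 / z) * (z / (1 + z)) ^ (m - j)
           - (-1) ^ j * (1 / z) * (z / (1 - z)) ^ (m - j)))"
    (is "_ = ?L1 + ?L2 + ?L3 - ?L4 + ?L5 + ?L6")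
proof -
  obtain p where m: "m = Suc p"
    using assms(1) by (cases m) auto
  define a where "a = z / (1 + z)"
  define b where "b = z / (1 - z)"
  have "(binomial_partial_fraction_sum m z + binomial_partial_fraction_sum m (-z)) / 2
      = (binomial_div_pred_sum m z + binomial_div_pred_sum m (-z))
        + (binomial_primitive m (-z) - binomial_primitive m z) / z
        - 2 / of_nat m * (binomial_primitive p z + binomial_primitive p (-z))"
    unfolding binomial_partial_fraction_sum_def m using assms(2)
    by (simp add: field_simps del: of_nat_Suc)
  also have "binomial_div_pred_sum m z + binomial_div_pred_sum m (-z) = ?L3 - ?L4"
    using binomial_div_pred_sum_even_part[OF assms(1)] .
  also have "(binomial_primitive m (-z) - binomial_primitive m z) / z = ?L2 + ?L6"
  proof -
    have "(\<Sum>j=0..m-1. 1 / of_nat (m - j) *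
            ((-1) ^ m * (1 / z) * a ^ (m - j) - (-1) ^ j * (1 / z) * b ^ (m - j)))
        = (\<Sum>j<m. ((-1) ^ m * a ^ (m - j) - (-1) ^ j * b ^ (m - j)) / of_nat (m - j)) / z"
      unfolding sum_divide_distrib using assms(2) m
      by (intro sum.cong) (auto simp: field_simps)
    then show ?thesis
      unfolding binomial_primitive_odd_part[OF assms(3)] a_def[symmetric] b_def[symmetric]
      by (simp add: add_divide_distrib)
  qed
  also have "2 / of_nat m * (binomial_primitive p z + binomial_primitive p (-z)) = - ?L1 - ?L5"
  proof -
    have shifted:
      "(\<Sum>j=1..m-1. 1 / of_nat (m - j) * ((-1) ^ m * a ^ (m - j) + (-1) ^ j * b ^ (m - j)))
        = - (\<Sum>j<p. ((-1) ^ p * a ^ (p - j) + (-1) ^ j * b ^ (p - j)) / of_nat (p - j))"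
      unfolding m sum_bounds_lt_plus1[symmetric] sum_negf[symmetric]
      by (intro sum.cong refl) (simp_all add: divide_simps del: of_nat_diff)
    show ?thesis
      unfolding binomial_primitive_even_part[OF assms(3)] a_def[symmetric] b_def[symmetric] shifted
      unfolding m diff_Suc_1 by (simp add: algebra_simps)
  qed
  finally show ?thesis
    by (simp add: algebra_simps)
qed

theorem lemma6:
  fixes m :: nat and z :: complex
  assumes "m \<ge> 2" and "0 < cmod z" and "cmod z < 1"
  shows "(\<lambda>n. let k = n + 1 in
            of_nat ((2*k) choose m) * z ^ (2*k)
              / (of_nat (2*k - 1) * of_nat k ^ 2 * of_nat (2*k + 1)))
    sums
    (2 * (-1) ^ (m - 1) / of_nat m * Ln (1 - z^2)
     + (-1) ^ m / z * Ln ((1 - z) / (1 + z))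
     + 1 / of_nat (m - 1) * ((-1) ^ m * (1 + z) * (z / (1 + z)) ^ m
                              + (1 - z) * (z / (1 - z)) ^ m)
     - 1 / of_nat m * ((-1) ^ m * z * (z / (1 + z)) ^ m - z * (z / (1 - z)) ^ m)
     + 2 / of_nat m * (\<Sum>j=1..m-1. 1 / of_nat (m - j) *
          ((-1) ^ m * (z / (1 + z)) ^ (m - j) + (-1) ^ j * (z / (1 - z)) ^ (m - j)))
     + (\<Sum>j=0..m-1. 1 / of_nat (m - j) *
          ((-1) ^ m * (1 / z) * (z / (1 + z)) ^ (m - j)
           - (-1) ^ j * (1 / z) * (z / (1 - z)) ^ (m - j))))"
proof -
  let ?c = "\<lambda>n. 2 / (of_nat n - 1) - 2 / (of_nat n + 1) - 4 / of_nat n ^ 2 :: complex"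
  let ?f = "\<lambda>n. of_nat (n choose m) * z ^ n * ?c n"
  have "z \<noteq> 0"
    using assms(2) by auto
  have "?f sums binomial_partial_fraction_sum m z"
    and "(\<lambda>n. (-1) ^ n * ?f n) sums binomial_partial_fraction_sum m (-z)"
    using binomial_partial_fraction_sums[of z m] binomial_partial_fraction_sums[of "-z" m]
      assms \<open>z \<noteq> 0\<close>
    by (simp_all add: power_minus[of z] mult_ac)
  from sums_even_terms[OF this]
  have "(\<lambda>n. ?f (2 * Suc n))
      sums ((binomial_partial_fraction_sum m z + binomial_partial_fraction_sum m (-z)) / 2)"
    using assms(1) by (subst sums_Suc_iff) (simp add: binomial_eq_0)
  moreover have "?f (2 * Suc n) = (let k = n + 1 in of_nat ((2*k) choose m) * z ^ (2*k)
      / (of_nat (2*k - 1) * of_nat k ^ 2 * of_nat (2*k + 1)))" for n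
    unfolding Let_def Suc_eq_plus1 partial_fraction_decomposition[OF le_add2] by simp
  ultimately show ?thesis
    unfolding binomial_partial_fraction_sum_even_part[OF assms(1) \<open>z \<noteq> 0\<close> assms(3)]
    by simp
qed

end
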